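(* Let $\mathbf{x} = B\mathbf{z}+\mathbf{g}$, where $B\in\mathbb{R}^{k\times k}$, $\mathbf{z}=(z_1,\dots,z_k)$ has mutually independent mean zero components with covariance $\mathrm{diag}(\mathbf{a})$, and $\mathbf{g}\sim N(\mathbf{0},\Sigma)$ is independent of $\mathbf{z}$; let $P$ be the law of $\mathbf{x}$ and $S=\mathrm{cov}(\mathbf{x}) = B\,\mathrm{diag}(\mathbf{a})B^T+\Sigma$. Let $f(\mathbf{u}\mid P)$ be either $$f(\mathbf{u}\mid P) = \log\mathbb{E}\exp(i\mathbf{u}^T\mathbf{x}) + \log\mathbb{E}\exp(-i\mathbf{u}^T\mathbf{x}) + \mathbf{u}^TS\mathbf{u}$$ or $$f(\mathbf{u}\mid P) = \log\mathbb{E}\exp(\mathbf{u}^T\mathbf{x}) - \tfrac12\mathbf{u}^TS\mathbf{u}.$$ Then at each $\mathbf{u}\in\mathbb{R}^k$ where $f$ is well-defined and twice differentiable, $\nabla^2 f(\mathbf{u}\mid P) = BD_{\mathbf{u}}B^T$ for some diagonal matrix $D_{\mathbf{u}}$ (which may differ between the two contrast functions).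
   Context: $i$ denotes the imaginary unit; $\mathrm{diag}(\mathbf{a})$ is the diagonal matrix with diagonal $\mathbf{a}$. *)

theory Defs
  imports "HOL-Probability.Probability"
begin

definition diag_mat :: "real^'n \<Rightarrow> real^'n^'n" where
  "diag_mat a = (\<chi> i j. if i = j then a $ i else 0)"

text \<open>g is a centred Gaussian vector N(0,Sigma) (possibly degenerate): Sigma is symmetric positive
  semidefinite and every linear functional v.g is N(0, v' Sigma v), a point mass at 0 if the
  variance vanishes.\<close>
definition gaussian_vec :: "'a measure \<Rightarrow> ('a \<Rightarrow> real^'n) \<Rightarrow> real^'n^'n \<Rightarrow> bool" where
  "gaussian_vec M g Sig \<longleftrightarrow> g \<in> borel_measurable M \<and> transpose Sig = Sig \<and>
     (\<forall>v. v \<bullet> (Sig *v v) \<ge> 0 \<and>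
        distr M borel (\<lambda>\<omega>. v \<bullet> g \<omega>) =
          (if v \<bullet> (Sig *v v) = 0 then return borel 0
           else density lborel (normal_density 0 (sqrt (v \<bullet> (Sig *v v))))))"

text \<open>H is the Hessian of f at u, where f is well-defined (predicate W) and twice differentiable
  at u: on an open neighbourhood U of u, f is well-defined and differentiable with gradient Df,
  and each component of Df is differentiable at u; H i j is the i-th partial of the j-th
  component of the gradient.\<close>
definition hessian_at :: "(real^'n \<Rightarrow> bool) \<Rightarrow> (real^'n \<Rightarrow> 'b::real_normed_vector)
    \<Rightarrow> real^'n \<Rightarrow> 'b^'n^'n \<Rightarrow> bool" where
  "hessian_at W f u H \<longleftrightarrow>
    (\<exists>U. open U \<and> u \<in> U \<and> (\<forall>v\<in>U. W v) \<and>
      (\<exists>Df :: real^'n \<Rightarrow> 'b^'n.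
        (\<forall>v\<in>U. (f has_derivative (\<lambda>h. \<Sum>j\<in>UNIV. (h $ j) *\<^sub>R (Df v $ j))) (at v)) \<and>
        (\<forall>j. ((\<lambda>v. Df v $ j) has_derivative (\<lambda>h. \<Sum>i\<in>UNIV. (h $ i) *\<^sub>R (H $ i $ j))) (at u))))"

text \<open>First contrast: log E exp(i u'x) + log E exp(-i u'x) + u'Su (principal complex logarithm),
  well-defined where both expectations are nonzero.\<close>
definition cf_char :: "'a measure \<Rightarrow> ('a \<Rightarrow> real^'n) \<Rightarrow> real^'n^'n \<Rightarrow> real^'n \<Rightarrow> complex" where
  "cf_char M x S u =
     Ln (\<integral>\<omega>. exp (\<i> * complex_of_real (u \<bullet> x \<omega>)) \<partial>M)
   + Ln (\<integral>\<omega>. exp (- (\<i> * complex_of_real (u \<bullet> x \<omega>))) \<partial>M)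
   + complex_of_real (u \<bullet> (S *v u))"

definition wd_char :: "'a measure \<Rightarrow> ('a \<Rightarrow> real^'n) \<Rightarrow> real^'n \<Rightarrow> bool" where
  "wd_char M x u \<longleftrightarrow>
     (\<integral>\<omega>. exp (\<i> * complex_of_real (u \<bullet> x \<omega>)) \<partial>M) \<noteq> 0 \<and>
     (\<integral>\<omega>. exp (- (\<i> * complex_of_real (u \<bullet> x \<omega>))) \<partial>M) \<noteq> 0"

definition cf_cgf :: "'a measure \<Rightarrow> ('a \<Rightarrow> real^'n) \<Rightarrow> real^'n^'n \<Rightarrow> real^'n \<Rightarrow> real" where
  "cf_cgf M x S u = ln (\<integral>\<omega>. exp (u \<bullet> x \<omega>) \<partial>M) - 1/2 * (u \<bullet> (S *v u))"

definition wd_cgf :: "'a measure \<Rightarrow> ('a \<Rightarrow> real^'n) \<Rightarrow> real^'n \<Rightarrow> bool" where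
  "wd_cgf M x u \<longleftrightarrow> integrable M (\<lambda>\<omega>. exp (u \<bullet> x \<omega>))"

end

theory Submission
  imports Defs
begin

text \<open>Write \<open>c\<^sub>j\<close> for the \<open>j\<close>-th column of \<open>B\<close>, so that \<open>u \<bullet> x = (\<Sum>j. (c\<^sub>j \<bullet> u) z\<^sub>j) + u \<bullet> g\<close>.
  By independence, the characteristic function and the moment generating function of \<open>x\<close>
  factor into the one-dimensional transforms of the \<open>z\<^sub>j\<close>, evaluated at \<open>c\<^sub>j \<bullet> u\<close>, times the
  Gaussian factor \<open>exp (\<mp>u \<bullet> \<Sigma> u / 2)\<close>, which cancels against the \<open>\<Sigma>\<close>-part of \<open>u \<bullet> S u\<close>.
  Hence each contrast is a separable function \<open>\<Sum>j. G\<^sub>j (c\<^sub>j \<bullet> u)\<close>, up to an imaginary part that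
  stays in \<open>2\<pi>\<int>\<close> and is therefore locally constant, and the Hessian of a separable function is
  \<open>\<Sum>j. G\<^sub>j'' (c\<^sub>j \<bullet> u) c\<^sub>j c\<^sub>j\<^sup>T = B diag (G'') B\<^sup>T\<close>.\<close>

section \<open>Linear algebra\<close>

lemma inner_matrix_vector_columns:
  fixes B :: "real^'n^'m"
  shows "v \<bullet> (B *v y) = (\<Sum>j\<in>UNIV. (column j B \<bullet> v) * y $ j)"
proof -
  have "v \<bullet> (B *v y) = (\<Sum>i\<in>UNIV. \<Sum>j\<in>UNIV. v $ i * B $ i $ j * y $ j)"
    by (simp add: inner_vec_def matrix_vector_mult_def sum_distrib_left mult_ac)
  also have "\<dots> = (\<Sum>j\<in>UNIV. \<Sum>i\<in>UNIV. v $ i * B $ i $ j * y $ j)"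
    by (rule sum.swap)
  finally show ?thesis
    by (simp add: inner_vec_def column_def sum_distrib_left mult_ac)
qed

lemma transpose_matrix_vector_nth: "(transpose B *v v) $ j = column j B \<bullet> (v :: real^'n)"
  by (simp add: matrix_vector_mult_def transpose_def column_def inner_vec_def mult_ac)

lemma diag_mat_vector_nth: "(diag_mat a *v y) $ j = a $ j * y $ j"
proof -
  have "(diag_mat a *v y) $ j = (\<Sum>k\<in>UNIV. if k = j then a $ j * y $ j else 0)"
    unfolding matrix_vector_mult_def diag_mat_def vec_lambda_beta by (rule sum.cong) auto
  then show ?thesis by simp
qed

lemma congruence_diag_mat_nth:
  "(B ** diag_mat d ** transpose B) $ i $ l = (\<Sum>j\<in>UNIV. B $ i $ j * d $ j * B $ l $ j)"
  by (simp add: matrix_matrix_mult_def diag_mat_def transpose_def if_distrib sum_distrib_right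
      cong: if_cong)

lemma quadratic_form_congruence_diag_mat:
  fixes B :: "real^'k^'n"
  shows "v \<bullet> ((B ** diag_mat a ** transpose B) *v v) = (\<Sum>j\<in>UNIV. a $ j * (column j B \<bullet> v)\<^sup>2)"
  by (simp add: matrix_vector_mul_assoc[symmetric] inner_matrix_vector_columns diag_mat_vector_nth
      transpose_matrix_vector_nth power2_eq_square mult_ac del: transpose_matrix_vector)

lemma open_image_inner_left:
  fixes c :: "'a::euclidean_space"
  assumes "open U" "c \<noteq> 0"
  shows "open ((\<lambda>v. c \<bullet> v) ` U)"
proof (rule open_surjective_linear_image[OF assms(1)])
  show "linear (\<lambda>v. c \<bullet> v)"
    by (simp add: bounded_linear.linear bounded_linear_inner_right)
  show "surj (\<lambda>v. c \<bullet> v)"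
  proof (rule surjI)
    show "c \<bullet> ((s / (c \<bullet> c)) *\<^sub>R c) = s" for s
      using assms(2) by simp
  qed
qed

section \<open>Hessians of separable functions\<close>

lemma sum_axis_scaleR: "(\<Sum>j\<in>UNIV. axis i (1::real) $ j *\<^sub>R D j) = (D i :: 'b::real_vector)"
proof -
  have "axis i 1 $ j *\<^sub>R D j = (if i = j then D j else 0)" for j
    by (simp add: axis_def)
  then show ?thesis by simp
qed

lemma has_derivative_coordinate_eq:
  fixes D :: "'n::finite \<Rightarrow> 'b::real_normed_vector"
  assumes "(f has_derivative (\<lambda>h. \<Sum>j\<in>UNIV. h $ j *\<^sub>R D j)) (at v)"
    and "(f has_derivative L) (at v)"
  shows "D i = L (axis i 1)"
proof -
  have "L = (\<lambda>h. \<Sum>j\<in>UNIV. h $ j *\<^sub>R D j)"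
    using has_derivative_unique[OF assms] by simp
  then show ?thesis by (simp add: sum_axis_scaleR)
qed

lemma has_derivative_comp_inner_column:
  fixes B :: "real^'k^'n"
  assumes "column j B \<noteq> 0 \<Longrightarrow> (g has_real_derivative g') (at (column j B \<bullet> v))"
  shows "((\<lambda>v. g (column j B \<bullet> v)) has_derivative (\<lambda>h. g' * (column j B \<bullet> h))) (at v)"
proof (cases "column j B = 0")
  case True
  then show ?thesis by simp
next
  case False
  show ?thesis
    using has_derivative_compose[OF has_derivative_inner_right[OF has_derivative_ident]
        assms[OF False, unfolded has_field_derivative_def]] .
qed

lemma hessian_at_in_interior:
  assumes "hessian_at W f u H"
  shows "u \<in> interior {v. W v}"
proof -
  from assms obtain U where "open U" "u \<in> U" "\<forall>v\<in>U. W v"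
    unfolding hessian_at_def by blast
  then have "U \<subseteq> interior {v. W v}"
    by (intro interior_maximal) auto
  with \<open>u \<in> U\<close> show ?thesis by blast
qed

text \<open>A vanishing column makes its summand constant, so nothing is assumed about \<open>G j\<close> there.\<close>

lemma hessian_at_separable:
  fixes f :: "real^'n \<Rightarrow> real" and B :: "real^'k^'n" and G G' :: "'k \<Rightarrow> real \<Rightarrow> real"
  assumes hess: "hessian_at W f u H"
    and f_eq: "\<And>v. v \<in> interior {v. W v} \<Longrightarrow> f v = (\<Sum>j\<in>UNIV. G j (column j B \<bullet> v))"
    and G': "\<And>j v. v \<in> interior {v. W v} \<Longrightarrow> column j B \<noteq> 0 \<Longrightarrow>
        (G j has_real_derivative G' j (column j B \<bullet> v)) (at (column j B \<bullet> v))"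
    and G'': "\<And>j. column j B \<noteq> 0 \<Longrightarrow> (G' j has_real_derivative G'' j) (at (column j B \<bullet> u))"
  shows "H = B ** diag_mat (\<chi> j. G'' j) ** transpose B"
proof -
  obtain U Df where U: "open U" "u \<in> U" "\<forall>v\<in>U. W v"
    and Df: "\<And>v. v \<in> U \<Longrightarrow> (f has_derivative (\<lambda>h. \<Sum>j\<in>UNIV. h $ j *\<^sub>R Df v $ j)) (at v)"
    and HD: "\<And>l. ((\<lambda>v. Df v $ l) has_derivative (\<lambda>h. \<Sum>i\<in>UNIV. h $ i *\<^sub>R H $ i $ l)) (at u)"
    using hess unfolding hessian_at_def by blast
  have U_interior: "U \<subseteq> interior {v. W v}"
    using U by (intro interior_maximal) auto
  have gradient: "Df v $ l = (\<Sum>j\<in>UNIV. B $ l $ j * G' j (column j B \<bullet> v))" if "v \<in> U" for v l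
  proof -
    have "((\<lambda>v. \<Sum>j\<in>UNIV. G j (column j B \<bullet> v)) has_derivative
        (\<lambda>h. \<Sum>j\<in>UNIV. G' j (column j B \<bullet> v) * (column j B \<bullet> h))) (at v)"
      using that U_interior by (intro has_derivative_sum has_derivative_comp_inner_column G') auto
    then have "(f has_derivative (\<lambda>h. \<Sum>j\<in>UNIV. G' j (column j B \<bullet> v) * (column j B \<bullet> h))) (at v)"
      by (rule has_derivative_transform_within_open[OF _ U(1) that]) (use U_interior f_eq in auto)
    from has_derivative_coordinate_eq[OF Df[OF that] this, of l] show ?thesis
      by (simp add: inner_axis column_def mult.commute)
  qed
  have "((\<lambda>v. Df v $ l) has_derivative (\<lambda>h. \<Sum>j\<in>UNIV. B $ l $ j * (G'' j * (column j B \<bullet> h)))) (at u)" for l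
  proof -
    have "((\<lambda>v. \<Sum>j\<in>UNIV. B $ l $ j * G' j (column j B \<bullet> v)) has_derivative
        (\<lambda>h. \<Sum>j\<in>UNIV. B $ l $ j * (G'' j * (column j B \<bullet> h)))) (at u)"
      by (intro has_derivative_sum has_derivative_mult_right has_derivative_comp_inner_column G'')
    then show ?thesis
      by (rule has_derivative_transform_within_open[OF _ U(1,2)]) (simp add: gradient)
  qed
  from has_derivative_coordinate_eq[OF HD this] show ?thesis
    by (simp add: vec_eq_iff congruence_diag_mat_nth inner_axis column_def mult_ac)
qed

lemma Im_in_2pi_Ints_if_exp_pos_real:
  assumes "exp w = complex_of_real r" "r > 0"
  shows "\<exists>n::int. Im w = 2 * pi * of_int n"
proof -
  have "exp (w - complex_of_real (ln r)) = 1"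
    using assms by (simp add: exp_diff exp_of_real)
  then obtain n :: int where "Im w = of_int (2 * n) * pi"
    unfolding exp_eq_1 by auto
  then show ?thesis by (intro exI[of _ n]) simp
qed

lemma has_derivative_Im_zero_if_Im_in_2pi_Ints:
  fixes f :: "'a::real_normed_vector \<Rightarrow> complex"
  assumes U: "open U" "v \<in> U" and cont: "continuous_on U f" and f': "(f has_derivative f') (at v)"
    and Im_f: "\<And>y. y \<in> U \<Longrightarrow> \<exists>n::int. Im (f y) = 2 * pi * of_int n"
  shows "Im (f' h) = 0"
proof -
  obtain r where r: "r > 0" "ball v r \<subseteq> U"
    using U open_contains_ball by blast
  have "(\<lambda>y. Im (f y)) constant_on ball v r"
  proof (rule continuous_discrete_range_constant)
    show "continuous_on (ball v r) (\<lambda>y. Im (f y))"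
      using continuous_on_subset[OF cont r(2)] by (intro continuous_intros)
    show "\<exists>e>0. \<forall>y. y \<in> ball v r \<and> Im (f y) \<noteq> Im (f x) \<longrightarrow> e \<le> norm (Im (f y) - Im (f x))"
      if "x \<in> ball v r" for x
    proof (intro exI[of _ "2 * pi"] conjI allI impI)
      fix y assume y: "y \<in> ball v r \<and> Im (f y) \<noteq> Im (f x)"
      have "x \<in> U" "y \<in> U" using r(2) that y by auto
      then obtain m n :: int where "Im (f x) = 2 * pi * m" "Im (f y) = 2 * pi * n"
        using Im_f by meson
      moreover from this y have "1 \<le> \<bar>real_of_int (n - m)\<bar>"
        by (auto simp del: of_int_diff)
      ultimately show "2 * pi \<le> norm (Im (f y) - Im (f x))"
        by (simp add: abs_mult flip: right_diff_distrib)
    qed simp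
  qed simp
  then obtain c where c: "\<And>y. y \<in> ball v r \<Longrightarrow> Im (f y) = c"
    unfolding constant_on_def by blast
  have "((\<lambda>y. Im (f y)) has_derivative (\<lambda>h. 0)) (at v)"
    by (rule has_derivative_transform_within_open[OF has_derivative_const[of c], of "ball v r"])
       (use r c in auto)
  moreover have "((\<lambda>y. Im (f y)) has_derivative (\<lambda>h. Im (f' h))) (at v)"
    by (rule has_derivative_Im[OF f'])
  ultimately have "(\<lambda>h. Im (f' h)) = (\<lambda>h. 0)"
    by (rule has_derivative_unique[rotated])
  then show ?thesis by metis
qed

lemma hessian_at_Re:
  fixes f :: "real^'n \<Rightarrow> complex"
  assumes hess: "hessian_at W f u H"
    and Im_f: "\<And>v. W v \<Longrightarrow> \<exists>n::int. Im (f v) = 2 * pi * of_int n"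
  shows "hessian_at W (\<lambda>v. Re (f v)) u (\<chi> i j. Re (H $ i $ j))"
    and "H = (\<chi> i j. complex_of_real (Re (H $ i $ j)))"
proof -
  obtain U Df where U: "open U" "u \<in> U" "\<forall>v\<in>U. W v"
    and Df: "\<And>v. v \<in> U \<Longrightarrow> (f has_derivative (\<lambda>h. \<Sum>j\<in>UNIV. h $ j *\<^sub>R Df v $ j)) (at v)"
    and HD: "\<And>l. ((\<lambda>v. Df v $ l) has_derivative (\<lambda>h. \<Sum>i\<in>UNIV. h $ i *\<^sub>R H $ i $ l)) (at u)"
    using hess unfolding hessian_at_def by blast
  have "continuous_on U f"
    using Df by (intro has_derivative_continuous_on) (auto intro: has_derivative_at_withinI)
  then have Im_Df: "Im (Df v $ l) = 0" if "v \<in> U" for v l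
    using has_derivative_Im_zero_if_Im_in_2pi_Ints[OF U(1) that _ Df[OF that], of "axis l 1"] Im_f U(3)
    by (simp add: sum_axis_scaleR)
  show "hessian_at W (\<lambda>v. Re (f v)) u (\<chi> i j. Re (H $ i $ j))"
    unfolding hessian_at_def
  proof (intro exI conjI ballI allI)
    show "open U" "u \<in> U" by (fact U)+
    show "W v" if "v \<in> U" for v using U(3) that by blast
    show "((\<lambda>v. Re (f v)) has_derivative (\<lambda>h. \<Sum>j\<in>UNIV. h $ j *\<^sub>R (\<chi> j. Re (Df v $ j)) $ j)) (at v)"
      if "v \<in> U" for v
      using has_derivative_Re[OF Df[OF that]] by simp
    show "((\<lambda>v. (\<chi> j. Re (Df v $ j)) $ l) has_derivative
        (\<lambda>h. \<Sum>i\<in>UNIV. h $ i *\<^sub>R (\<chi> i j. Re (H $ i $ j)) $ i $ l)) (at u)" for l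
      using has_derivative_Re[OF HD] by simp
  qed
  have "Im (H $ i $ l) = 0" for i l
  proof -
    have "((\<lambda>v. Im (Df v $ l)) has_derivative (\<lambda>h. 0)) (at u)"
      by (rule has_derivative_transform_within_open[OF has_derivative_const U(1,2)]) (simp add: Im_Df)
    moreover have "((\<lambda>v. Im (Df v $ l)) has_derivative (\<lambda>h. \<Sum>i\<in>UNIV. h $ i *\<^sub>R Im (H $ i $ l))) (at u)"
      using has_derivative_Im[OF HD] by simp
    ultimately show ?thesis
      using has_derivative_coordinate_eq[where D = "\<lambda>i. Im (H $ i $ l)"] by fastforce
  qed
  then show "H = (\<chi> i j. complex_of_real (Re (H $ i $ j)))"
    by (simp add: vec_eq_iff complex_eq_iff)
qed

section \<open>Differentiation under the integral sign\<close>

lemma has_real_derivative_integral: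
  fixes F F' :: "real \<Rightarrow> 'a \<Rightarrow> real"
  assumes e: "e > 0"
    and F': "\<And>s \<omega>. s \<in> ball t e \<Longrightarrow> \<omega> \<in> space M \<Longrightarrow> ((\<lambda>s. F s \<omega>) has_real_derivative F' s \<omega>) (at s)"
    and int_F: "\<And>s. s \<in> ball t e \<Longrightarrow> integrable M (F s)"
    and meas_F': "F' t \<in> borel_measurable M"
    and int_g: "integrable M g"
    and bound: "\<And>s \<omega>. s \<in> ball t e \<Longrightarrow> \<omega> \<in> space M \<Longrightarrow> \<bar>F' s \<omega>\<bar> \<le> g \<omega>"
  shows "((\<lambda>s. \<integral>\<omega>. F s \<omega> \<partial>M) has_real_derivative (\<integral>\<omega>. F' t \<omega> \<partial>M)) (at t)"
proof -
  have t: "t \<in> ball t e" using e by simp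
  have "((\<lambda>s. \<integral>\<omega>. F s \<omega> \<partial>M) has_real_derivative (\<integral>\<omega>. F' t \<omega> \<partial>M)) (at t within ball t e)"
    unfolding has_field_derivative_iff tendsto_at_iff_sequentially
  proof (intro allI impI)
    fix X :: "nat \<Rightarrow> real" assume X: "\<forall>i. X i \<in> ball t e - {t}" "X \<longlonglongrightarrow> t"
    define Q where "Q i \<omega> = (F (X i) \<omega> - F t \<omega>) / (X i - t)" for i \<omega>
    have "(\<lambda>i. \<integral>\<omega>. Q i \<omega> \<partial>M) \<longlonglongrightarrow> (\<integral>\<omega>. F' t \<omega> \<partial>M)"
    proof (rule integral_dominated_convergence[OF _ _ int_g])
      show "Q i \<in> borel_measurable M" for i
        using X int_F[OF t] int_F[of "X i"] unfolding Q_def by auto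
      show "AE \<omega> in M. (\<lambda>i. Q i \<omega>) \<longlonglongrightarrow> F' t \<omega>"
      proof (rule AE_I2)
        fix \<omega> assume "\<omega> \<in> space M"
        then have "((\<lambda>s. (F s \<omega> - F t \<omega>) / (s - t)) \<longlongrightarrow> F' t \<omega>) (at t)"
          using F'[OF t] unfolding has_field_derivative_iff by blast
        then show "(\<lambda>i. Q i \<omega>) \<longlonglongrightarrow> F' t \<omega>"
          using X unfolding Q_def tendsto_at_iff_sequentially o_def by auto
      qed
      show "AE \<omega> in M. norm (Q i \<omega>) \<le> g \<omega>" for i
      proof (rule AE_I2)
        fix \<omega> assume \<omega>: "\<omega> \<in> space M"
        have Xi: "X i \<in> ball t e" "X i \<noteq> t" using X by auto
        have "norm (F (X i) \<omega> - F t \<omega>) \<le> g \<omega> * norm (X i - t)"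
          by (rule field_differentiable_bound[OF convex_ball _ _ Xi(1) t])
             (use F' bound \<omega> in \<open>auto intro: has_field_derivative_at_within\<close>)
        then show "norm (Q i \<omega>) \<le> g \<omega>"
          using Xi(2) by (simp add: Q_def divide_le_eq)
      qed
    qed (fact meas_F')
    moreover have "(\<integral>\<omega>. Q i \<omega> \<partial>M) = ((\<integral>\<omega>. F (X i) \<omega> \<partial>M) - (\<integral>\<omega>. F t \<omega> \<partial>M)) / (X i - t)" for i
      using X int_F[OF t] int_F[of "X i"] by (simp add: Q_def integral_diff)
    ultimately show "((\<lambda>s. ((\<integral>\<omega>. F s \<omega> \<partial>M) - (\<integral>\<omega>. F t \<omega> \<partial>M)) / (s - t)) \<circ> X)
        \<longlonglongrightarrow> (\<integral>\<omega>. F' t \<omega> \<partial>M)"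
      by (simp add: o_def)
  qed
  then show ?thesis using at_within_open[OF t] by simp
qed

lemma abs_power_le_one_plus_square:
  fixes y :: real
  assumes "m \<le> 2"
  shows "\<bar>y\<bar> ^ m \<le> 1 + y\<^sup>2"
proof -
  consider "m = 0" | "m = 1" | "m = 2" using assms by linarith
  then show ?thesis
  proof cases
    case 2
    have "0 \<le> (\<bar>y\<bar> - 1)\<^sup>2" by simp
    then show ?thesis using 2 by (simp add: power2_diff)
  qed auto
qed

lemma abs_power_le_exp:
  fixes y :: real
  assumes "\<delta> > 0" "m \<le> 2"
  shows "\<bar>y\<bar> ^ m \<le> (1 + 2 / \<delta>\<^sup>2) * exp (\<delta> * \<bar>y\<bar>)"
proof -
  have nonneg: "0 \<le> \<delta> * \<bar>y\<bar>" using assms(1) by simp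
  have "(\<delta> * \<bar>y\<bar>)\<^sup>2 / 2 \<le> exp (\<delta> * \<bar>y\<bar>)"
    using exp_lower_Taylor_quadratic[OF nonneg] nonneg by linarith
  then have "y\<^sup>2 \<le> 2 / \<delta>\<^sup>2 * exp (\<delta> * \<bar>y\<bar>)"
    using assms(1) by (simp add: field_simps power_mult_distrib)
  moreover have "1 \<le> exp (\<delta> * \<bar>y\<bar>)" using assms(1) by simp
  ultimately show ?thesis
    using abs_power_le_one_plus_square[OF assms(2), of y] by (simp only: distrib_right)
qed

lemma abs_power_mult_exp_le:
  fixes y s t :: real
  assumes "\<bar>s - t\<bar> < \<delta>" "m \<le> 2"
  shows "\<bar>y ^ m * exp (s * y)\<bar> \<le> (1 + 2 / \<delta>\<^sup>2) * (exp ((t + 2 * \<delta>) * y) + exp ((t - 2 * \<delta>) * y))"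
proof -
  have \<delta>: "\<delta> > 0" using assms(1) by linarith
  have "(s - t) * y \<le> \<bar>s - t\<bar> * \<bar>y\<bar>"
    by (metis abs_ge_self abs_mult)
  also have "\<dots> \<le> \<delta> * \<bar>y\<bar>"
    using assms(1) by (intro mult_right_mono) auto
  finally have "(s - t) * y \<le> \<delta> * \<bar>y\<bar>" .
  then have "s * y + \<delta> * \<bar>y\<bar> \<le> (t + 2 * \<delta>) * y \<or> s * y + \<delta> * \<bar>y\<bar> \<le> (t - 2 * \<delta>) * y"
    by (cases "y \<ge> 0") (auto simp: algebra_simps)
  then have "exp (s * y + \<delta> * \<bar>y\<bar>) \<le> exp ((t + 2 * \<delta>) * y) \<or>
      exp (s * y + \<delta> * \<bar>y\<bar>) \<le> exp ((t - 2 * \<delta>) * y)"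
    by (simp only: exp_le_cancel_iff)
  then have exp_le: "exp (s * y) * exp (\<delta> * \<bar>y\<bar>) \<le> exp ((t + 2 * \<delta>) * y) + exp ((t - 2 * \<delta>) * y)"
    using exp_gt_zero[of "(t + 2 * \<delta>) * y"] exp_gt_zero[of "(t - 2 * \<delta>) * y"]
    by (simp only: exp_add[symmetric]) linarith
  have "\<bar>y ^ m * exp (s * y)\<bar> \<le> (1 + 2 / \<delta>\<^sup>2) * exp (\<delta> * \<bar>y\<bar>) * exp (s * y)"
    using abs_power_le_exp[OF \<delta> assms(2), of y] by (simp add: abs_mult power_abs)
  also have "\<dots> = (1 + 2 / \<delta>\<^sup>2) * (exp (s * y) * exp (\<delta> * \<bar>y\<bar>))"
    by (simp only: mult_ac)
  also have "\<dots> \<le> (1 + 2 / \<delta>\<^sup>2) * (exp ((t + 2 * \<delta>) * y) + exp ((t - 2 * \<delta>) * y))"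
    by (rule mult_left_mono[OF exp_le]) simp
  finally show ?thesis .
qed

lemma (in finite_measure) has_real_derivative_trig_moment:
  fixes X :: "'a \<Rightarrow> real"
  assumes [measurable]: "X \<in> borel_measurable M"
    and X2: "integrable M (\<lambda>\<omega>. (X \<omega>)\<^sup>2)" and n: "n \<le> 1"
  shows "((\<lambda>s. \<integral>\<omega>. X \<omega> ^ n * cos (s * X \<omega>) \<partial>M) has_real_derivative
      (\<integral>\<omega>. - (X \<omega> ^ Suc n * sin (t * X \<omega>)) \<partial>M)) (at t)"
    and "((\<lambda>s. \<integral>\<omega>. X \<omega> ^ n * sin (s * X \<omega>) \<partial>M) has_real_derivative
      (\<integral>\<omega>. X \<omega> ^ Suc n * cos (t * X \<omega>) \<partial>M)) (at t)"
proof -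
  define g where "g \<omega> = 1 + (X \<omega>)\<^sup>2" for \<omega>
  have int_g: "integrable M g"
    unfolding g_def using X2 by simp
  have bound: "\<bar>X \<omega> ^ m * c\<bar> \<le> g \<omega>" if "m \<le> 2" "\<bar>c\<bar> \<le> 1" for \<omega> m c
  proof -
    have "\<bar>X \<omega> ^ m * c\<bar> \<le> \<bar>X \<omega>\<bar> ^ m"
      using that(2) by (simp add: abs_mult power_abs mult_left_le)
    then show ?thesis
      unfolding g_def using abs_power_le_one_plus_square[OF that(1)] by (rule order_trans)
  qed
  have int: "integrable M (\<lambda>\<omega>. X \<omega> ^ m * h (s * X \<omega>))"
    if "m \<le> 2" "h \<in> borel_measurable borel" "\<And>x. \<bar>h x\<bar> \<le> 1" for m h s
  proof (rule Bochner_Integration.integrable_bound[OF int_g])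
    show "(\<lambda>\<omega>. X \<omega> ^ m * h (s * X \<omega>)) \<in> borel_measurable M"
      using that(2) by measurable
    show "AE \<omega> in M. norm (X \<omega> ^ m * h (s * X \<omega>)) \<le> norm (g \<omega>)"
      using bound[OF that(1) that(3)] by (auto simp: g_def)
  qed
  show "((\<lambda>s. \<integral>\<omega>. X \<omega> ^ n * cos (s * X \<omega>) \<partial>M) has_real_derivative
      (\<integral>\<omega>. - (X \<omega> ^ Suc n * sin (t * X \<omega>)) \<partial>M)) (at t)"
  proof (rule has_real_derivative_integral[where e = 1 and g = g])
    show "((\<lambda>s. X \<omega> ^ n * cos (s * X \<omega>)) has_real_derivative - (X \<omega> ^ Suc n * sin (s * X \<omega>))) (at s)"
      for s \<omega> by (auto intro!: derivative_eq_intros simp: mult_ac)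
    show "\<bar>- (X \<omega> ^ Suc n * sin (s * X \<omega>))\<bar> \<le> g \<omega>" for s \<omega>
      using n by (simp only: abs_minus_cancel) (intro bound, auto)
  qed (use n in \<open>auto intro: int int_g\<close>)
  show "((\<lambda>s. \<integral>\<omega>. X \<omega> ^ n * sin (s * X \<omega>) \<partial>M) has_real_derivative
      (\<integral>\<omega>. X \<omega> ^ Suc n * cos (t * X \<omega>) \<partial>M)) (at t)"
  proof (rule has_real_derivative_integral[where e = 1 and g = g])
    show "((\<lambda>s. X \<omega> ^ n * sin (s * X \<omega>)) has_real_derivative X \<omega> ^ Suc n * cos (s * X \<omega>)) (at s)"
      for s \<omega> by (auto intro!: derivative_eq_intros simp: mult_ac)
    show "\<bar>X \<omega> ^ Suc n * cos (s * X \<omega>)\<bar> \<le> g \<omega>" for s \<omega>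
      using n by (intro bound) auto
  qed (use n in \<open>auto intro: int int_g\<close>)
qed

lemma has_real_derivative_exp_moment:
  fixes X :: "'a \<Rightarrow> real"
  assumes [measurable]: "X \<in> borel_measurable M" and e: "e > 0"
    and int_exp: "\<And>s. s \<in> ball t e \<Longrightarrow> integrable M (\<lambda>\<omega>. exp (s * X \<omega>))" and n: "n \<le> 1"
  shows "((\<lambda>s. \<integral>\<omega>. X \<omega> ^ n * exp (s * X \<omega>) \<partial>M) has_real_derivative
      (\<integral>\<omega>. X \<omega> ^ Suc n * exp (t * X \<omega>) \<partial>M)) (at t)"
proof -
  define \<delta> where "\<delta> = e / 4"
  define g where "g \<omega> = (1 + 2 / \<delta>\<^sup>2) * (exp ((t + 2 * \<delta>) * X \<omega>) + exp ((t - 2 * \<delta>) * X \<omega>))" for \<omega>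
  have \<delta>: "\<delta> > 0" "t + 2 * \<delta> \<in> ball t e" "t - 2 * \<delta> \<in> ball t e"
    using e by (auto simp: \<delta>_def dist_real_def)
  have int_g: "integrable M g"
    unfolding g_def using int_exp[OF \<delta>(2)] int_exp[OF \<delta>(3)] by simp
  have bound: "\<bar>X \<omega> ^ m * exp (s * X \<omega>)\<bar> \<le> g \<omega>" if "s \<in> ball t \<delta>" "m \<le> 2" for s \<omega> m
    unfolding g_def using that by (intro abs_power_mult_exp_le) (auto simp: dist_real_def abs_minus_commute)
  have int: "integrable M (\<lambda>\<omega>. X \<omega> ^ m * exp (s * X \<omega>))" if "s \<in> ball t \<delta>" "m \<le> 2" for s m
  proof (rule Bochner_Integration.integrable_bound[OF int_g])
    show "(\<lambda>\<omega>. X \<omega> ^ m * exp (s * X \<omega>)) \<in> borel_measurable M" by measurable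
    show "AE \<omega> in M. norm (X \<omega> ^ m * exp (s * X \<omega>)) \<le> norm (g \<omega>)"
      using bound[OF that] by (auto intro: order_trans[OF _ abs_ge_self])
  qed
  show ?thesis
  proof (rule has_real_derivative_integral[where e = \<delta> and g = g])
    show "((\<lambda>s. X \<omega> ^ n * exp (s * X \<omega>)) has_real_derivative X \<omega> ^ Suc n * exp (s * X \<omega>)) (at s)"
      for s \<omega> by (auto intro!: derivative_eq_intros simp: mult_ac)
    show "\<bar>X \<omega> ^ Suc n * exp (s * X \<omega>)\<bar> \<le> g \<omega>" if "s \<in> ball t \<delta>" for s \<omega>
      using n by (intro bound that) auto
  qed (use n \<delta>(1) in \<open>auto intro: int int_g\<close>)
qed

lemma (in prob_space) norm_char_square_twice_differentiable:
  fixes X :: "'a \<Rightarrow> real"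
  assumes [measurable]: "X \<in> borel_measurable M" and X2: "integrable M (\<lambda>\<omega>. (X \<omega>)\<^sup>2)"
  shows "\<exists>N'. (\<forall>t. ((\<lambda>s. (cmod (\<integral>\<omega>. iexp (s * X \<omega>) \<partial>M))\<^sup>2) has_real_derivative N' t) (at t))
    \<and> (\<forall>t. \<exists>D. (N' has_real_derivative D) (at t))"
proof -
  define C where "C t = (\<integral>\<omega>. cos (t * X \<omega>) \<partial>M)" for t
  define S where "S t = (\<integral>\<omega>. sin (t * X \<omega>) \<partial>M)" for t
  define C' where "C' t = (\<integral>\<omega>. - (X \<omega> * sin (t * X \<omega>)) \<partial>M)" for t
  define S' where "S' t = (\<integral>\<omega>. X \<omega> * cos (t * X \<omega>) \<partial>M)" for t
  note trig0 = has_real_derivative_trig_moment[OF assms, where n = 0, simplified]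
  note trig1 = has_real_derivative_trig_moment[OF assms, where n = 1, simplified]
  have C: "(C has_real_derivative C' t) (at t)" and S: "(S has_real_derivative S' t) (at t)" for t
    unfolding C_def S_def C'_def S'_def using trig0 by simp_all
  have C': "\<exists>D. (C' has_real_derivative D) (at t)" and S': "\<exists>D. (S' has_real_derivative D) (at t)" for t
    unfolding C'_def S'_def using DERIV_minus[OF trig1(2)] trig1(1) by (simp_all, blast+)
  have "(cmod (\<integral>\<omega>. iexp (t * X \<omega>) \<partial>M))\<^sup>2 = (C t)\<^sup>2 + (S t)\<^sup>2" for t
  proof -
    have "integrable M (\<lambda>\<omega>. iexp (t * X \<omega>))"
      by (rule integrable_iexp) auto
    then show ?thesis
      unfolding cmod_power2 C_def S_def by (simp flip: integral_Re integral_Im add: Re_exp Im_exp)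
  qed
  then have "(\<lambda>s. (cmod (\<integral>\<omega>. iexp (s * X \<omega>) \<partial>M))\<^sup>2) = (\<lambda>s. (C s)\<^sup>2 + (S s)\<^sup>2)"
    by simp
  moreover have "((\<lambda>s. (C s)\<^sup>2 + (S s)\<^sup>2) has_real_derivative 2 * C t * C' t + 2 * S t * S' t) (at t)" for t
    by (rule derivative_eq_intros C S refl | simp)+
  moreover have "\<exists>D. ((\<lambda>t. 2 * C t * C' t + 2 * S t * S' t) has_real_derivative D) (at t)" for t
  proof -
    obtain D1 D2 where "(C' has_real_derivative D1) (at t)" "(S' has_real_derivative D2) (at t)"
      using C' S' by blast
    with C S show ?thesis
      by (intro exI) (rule derivative_eq_intros refl | assumption)+
  qed
  ultimately show ?thesis
    by (intro exI[of _ "\<lambda>t. 2 * C t * C' t + 2 * S t * S' t"]) simp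
qed

section \<open>Gaussian and independent random variables\<close>

lemma char_normal_density:
  assumes "\<sigma> > 0"
  shows "char (density lborel (normal_density 0 \<sigma>)) t = complex_of_real (exp (- (\<sigma> * t)\<^sup>2 / 2))"
proof -
  have scale: "\<sigma> * normal_density 0 \<sigma> (\<sigma> * s) = std_normal_density s" for s
    using assms by (simp add: normal_density_def real_sqrt_mult power_mult_distrib)
  have "char (density lborel (normal_density 0 \<sigma>)) t
      = (\<integral>y. normal_density 0 \<sigma> y *\<^sub>R iexp (t * y) \<partial>lborel)"
    unfolding char_def by (subst integral_density) auto
  also have "\<dots> = \<bar>\<sigma>\<bar> *\<^sub>R (\<integral>s. normal_density 0 \<sigma> (0 + \<sigma> * s) *\<^sub>R iexp (t * (0 + \<sigma> * s)) \<partial>lborel)"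
    using assms by (intro lborel_integral_real_affine) auto
  also have "\<dots> = (\<integral>s. (\<sigma> * normal_density 0 \<sigma> (\<sigma> * s)) *\<^sub>R iexp ((\<sigma> * t) * s) \<partial>lborel)"
    using assms by (simp add: mult_ac flip: integral_scaleR_right)
  also have "\<dots> = (\<integral>s. std_normal_density s *\<^sub>R iexp ((\<sigma> * t) * s) \<partial>lborel)"
    by (simp only: scale)
  also have "\<dots> = char std_normal_distribution (\<sigma> * t)"
    unfolding char_def by (subst integral_density) auto
  finally show ?thesis
    by (simp add: char_std_normal_distribution)
qed

lemma normal_density_mult_exp:
  assumes "\<sigma> > 0"
  shows "normal_density 0 \<sigma> y * exp y = exp (\<sigma>\<^sup>2 / 2) * normal_density (\<sigma>\<^sup>2) \<sigma> y"
proof -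
  have "- y\<^sup>2 / (2 * \<sigma>\<^sup>2) + y = \<sigma>\<^sup>2 / 2 + - (y - \<sigma>\<^sup>2)\<^sup>2 / (2 * \<sigma>\<^sup>2)"
    using assms by (simp add: field_simps power2_eq_square)
  then show ?thesis
    unfolding normal_density_def by (simp add: mult_ac flip: exp_add)
qed

lemma mgf_normal_density:
  assumes "\<sigma> > 0"
  shows "integrable (density lborel (normal_density 0 \<sigma>)) exp"
    and "(\<integral>y. exp y \<partial>density lborel (normal_density 0 \<sigma>)) = exp (\<sigma>\<^sup>2 / 2)"
  using assms by (simp_all add: integrable_density integral_density normal_density_mult_exp)

lemma gaussian_vec_char:
  assumes "gaussian_vec M g Sig"
  shows "(\<integral>\<omega>. iexp (v \<bullet> g \<omega>) \<partial>M) = complex_of_real (exp (- (v \<bullet> (Sig *v v)) / 2))"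
proof -
  from assms(1) have [measurable]: "g \<in> borel_measurable M"
    unfolding gaussian_vec_def by simp
  have meas: "(\<lambda>\<omega>. v \<bullet> g \<omega>) \<in> borel_measurable M" by measurable
  have "(\<integral>\<omega>. iexp (v \<bullet> g \<omega>) \<partial>M) = char (distr M borel (\<lambda>\<omega>. v \<bullet> g \<omega>)) 1"
    unfolding char_def using meas by (simp add: integral_distr)
  also have "\<dots> = complex_of_real (exp (- (v \<bullet> (Sig *v v)) / 2))"
  proof (cases "v \<bullet> (Sig *v v) = 0")
    case True
    then show ?thesis
      using assms(1) unfolding gaussian_vec_def by (simp add: char_def integral_return)
  next
    case False
    with assms(1) have "v \<bullet> (Sig *v v) > 0"
      and "distr M borel (\<lambda>\<omega>. v \<bullet> g \<omega>) = density lborel (normal_density 0 (sqrt (v \<bullet> (Sig *v v))))"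
      unfolding gaussian_vec_def by (auto simp: order_le_less)
    then show ?thesis by (simp add: char_normal_density)
  qed
  finally show ?thesis .
qed

lemma gaussian_vec_mgf:
  assumes "gaussian_vec M g Sig"
  shows "integrable M (\<lambda>\<omega>. exp (v \<bullet> g \<omega>))"
    and "(\<integral>\<omega>. exp (v \<bullet> g \<omega>) \<partial>M) = exp (v \<bullet> (Sig *v v) / 2)"
proof -
  from assms have [measurable]: "g \<in> borel_measurable M"
    unfolding gaussian_vec_def by simp
  have meas: "(\<lambda>\<omega>. v \<bullet> g \<omega>) \<in> borel_measurable M" by measurable
  have "integrable (distr M borel (\<lambda>\<omega>. v \<bullet> g \<omega>)) exp \<and>
      (\<integral>y. exp y \<partial>distr M borel (\<lambda>\<omega>. v \<bullet> g \<omega>)) = exp (v \<bullet> (Sig *v v) / 2)"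
  proof (cases "v \<bullet> (Sig *v v) = 0")
    case True
    then show ?thesis
      using assms unfolding gaussian_vec_def
      by (simp add: integral_return integrable_iff_bounded nn_integral_return)
  next
    case False
    with assms have "v \<bullet> (Sig *v v) > 0"
      and "distr M borel (\<lambda>\<omega>. v \<bullet> g \<omega>) = density lborel (normal_density 0 (sqrt (v \<bullet> (Sig *v v))))"
      unfolding gaussian_vec_def by (auto simp: order_le_less)
    then show ?thesis by (simp add: mgf_normal_density)
  qed
  then show "integrable M (\<lambda>\<omega>. exp (v \<bullet> g \<omega>))"
    and "(\<integral>\<omega>. exp (v \<bullet> g \<omega>) \<partial>M) = exp (v \<bullet> (Sig *v v) / 2)"
    using meas by (simp_all add: integrable_distr_eq integral_distr)
qed

context prob_space
begin

lemma integral_iexp_sum_indep: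
  assumes "indep_vars (\<lambda>_. borel) X I"
  shows "(\<integral>\<omega>. iexp (\<Sum>i\<in>I. X i \<omega>) \<partial>M) = (\<Prod>i\<in>I. \<integral>\<omega>. iexp (X i \<omega>) \<partial>M)"
proof -
  have [measurable]: "X i \<in> borel_measurable M" if "i \<in> I" for i
    using assms that unfolding indep_vars_def by blast
  show ?thesis
    using char_distr_sum[OF assms, of 1] by (simp add: char_def integral_distr)
qed

lemma integral_iexp_add_indep:
  assumes "indep_var borel X borel Y"
  shows "(\<integral>\<omega>. iexp (X \<omega> + Y \<omega>) \<partial>M) = (\<integral>\<omega>. iexp (X \<omega>) \<partial>M) * (\<integral>\<omega>. iexp (Y \<omega>) \<partial>M)"
proof -
  have [measurable]: "X \<in> borel_measurable M" "Y \<in> borel_measurable M"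
    using indep_var_rv1[OF assms] indep_var_rv2[OF assms] by simp_all
  show ?thesis
    using char_distr_add[OF assms, of 1] by (simp add: char_def integral_distr)
qed

lemma nn_integral_exp_nonzero:
  fixes X :: "'a \<Rightarrow> real"
  assumes "X \<in> borel_measurable M"
  shows "(\<integral>\<^sup>+\<omega>. ennreal (exp (X \<omega>)) \<partial>M) \<noteq> 0"
proof
  assume "(\<integral>\<^sup>+\<omega>. ennreal (exp (X \<omega>)) \<partial>M) = 0"
  then have "AE \<omega> in M. ennreal (exp (X \<omega>)) = 0"
    using assms by (subst (asm) nn_integral_0_iff_AE) measurable
  then show False by (simp add: AE_False)
qed

lemma integral_exp_pos:
  fixes X :: "'a \<Rightarrow> real"
  assumes "integrable M (\<lambda>\<omega>. exp (X \<omega>))"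
  shows "(\<integral>\<omega>. exp (X \<omega>) \<partial>M) > 0"
proof -
  have "(\<integral>\<omega>. exp (X \<omega>) \<partial>M) \<noteq> 0"
  proof
    assume "(\<integral>\<omega>. exp (X \<omega>) \<partial>M) = 0"
    then have "AE \<omega> in M. exp (X \<omega>) = 0"
      using integral_nonneg_eq_0_iff_AE[OF assms] by simp
    then show False by (simp add: AE_False)
  qed
  moreover have "(\<integral>\<omega>. exp (X \<omega>) \<partial>M) \<ge> 0"
    by (intro integral_nonneg_AE) simp
  ultimately show ?thesis by linarith
qed

lemma integral_exp_sum_indep:
  fixes X :: "'i \<Rightarrow> 'a \<Rightarrow> real"
  assumes I: "finite I" and indep: "indep_vars (\<lambda>_. borel) X I"
    and int: "integrable M (\<lambda>\<omega>. exp (\<Sum>i\<in>I. X i \<omega>))"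
  shows "\<And>i. i \<in> I \<Longrightarrow> integrable M (\<lambda>\<omega>. exp (X i \<omega>))"
    and "(\<integral>\<omega>. exp (\<Sum>i\<in>I. X i \<omega>) \<partial>M) = (\<Prod>i\<in>I. \<integral>\<omega>. exp (X i \<omega>) \<partial>M)"
proof -
  have [measurable]: "X i \<in> borel_measurable M" if "i \<in> I" for i
    using indep that unfolding indep_vars_def by blast
  have "(\<Prod>i\<in>I. \<integral>\<^sup>+\<omega>. ennreal (exp (X i \<omega>)) \<partial>M) = (\<integral>\<^sup>+\<omega>. (\<Prod>i\<in>I. ennreal (exp (X i \<omega>))) \<partial>M)"
    by (rule indep_vars_nn_integral[OF I indep_vars_compose2[OF indep], symmetric]) auto
  also have "\<dots> = (\<integral>\<^sup>+\<omega>. ennreal (exp (\<Sum>i\<in>I. X i \<omega>)) \<partial>M)"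
    by (simp add: prod_ennreal exp_sum I)
  also have "\<dots> < \<top>"
    using int by (simp add: integrable_iff_bounded)
  finally have "(\<Prod>i\<in>I. \<integral>\<^sup>+\<omega>. ennreal (exp (X i \<omega>)) \<partial>M) \<noteq> \<top>" by simp
  then have "(\<integral>\<^sup>+\<omega>. ennreal (exp (X i \<omega>)) \<partial>M) < \<top>" if "i \<in> I" for i
    using that nn_integral_exp_nonzero by (auto simp: ennreal_prod_eq_top I top.not_eq_extremum)
  then show int_X: "integrable M (\<lambda>\<omega>. exp (X i \<omega>))" if "i \<in> I" for i
    using that by (simp add: integrable_iff_bounded)
  have "(\<integral>\<omega>. exp (\<Sum>i\<in>I. X i \<omega>) \<partial>M) = (\<integral>\<omega>. (\<Prod>i\<in>I. exp (X i \<omega>)) \<partial>M)"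
    by (simp add: exp_sum I)
  also have "\<dots> = (\<Prod>i\<in>I. \<integral>\<omega>. exp (X i \<omega>) \<partial>M)"
    by (rule indep_vars_lebesgue_integral[OF I indep_vars_compose2[OF indep] int_X]) auto
  finally show "(\<integral>\<omega>. exp (\<Sum>i\<in>I. X i \<omega>) \<partial>M) = (\<Prod>i\<in>I. \<integral>\<omega>. exp (X i \<omega>) \<partial>M)" .
qed

lemma integral_exp_add_indep:
  fixes X Y :: "'a \<Rightarrow> real"
  assumes indep: "indep_var borel X borel Y" and int: "integrable M (\<lambda>\<omega>. exp (X \<omega> + Y \<omega>))"
  shows "integrable M (\<lambda>\<omega>. exp (X \<omega>))" and "integrable M (\<lambda>\<omega>. exp (Y \<omega>))"
    and "(\<integral>\<omega>. exp (X \<omega> + Y \<omega>) \<partial>M) = (\<integral>\<omega>. exp (X \<omega>) \<partial>M) * (\<integral>\<omega>. exp (Y \<omega>) \<partial>M)"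
proof -
  have "case_bool borel borel = (\<lambda>_. borel :: real measure)"
    by (simp add: fun_eq_iff split: bool.split)
  then have indep_bool: "indep_vars (\<lambda>_. borel) (case_bool X Y) UNIV"
    using indep unfolding indep_var_def by simp
  have sum_bool: "(\<Sum>i\<in>UNIV. case_bool X Y i \<omega>) = X \<omega> + Y \<omega>" for \<omega>
    by (simp add: UNIV_bool add.commute)
  note * = integral_exp_sum_indep[OF finite indep_bool, unfolded sum_bool, OF int]
  show "integrable M (\<lambda>\<omega>. exp (X \<omega>))" using *(1)[of True] by simp
  show "integrable M (\<lambda>\<omega>. exp (Y \<omega>))" using *(1)[of False] by simp
  show "(\<integral>\<omega>. exp (X \<omega> + Y \<omega>) \<partial>M) = (\<integral>\<omega>. exp (X \<omega>) \<partial>M) * (\<integral>\<omega>. exp (Y \<omega>) \<partial>M)"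
    using *(2) by (simp add: UNIV_bool mult.commute)
qed

end

section \<open>The noisy ICA model\<close>

locale noisy_ica = prob_space +
  fixes z g :: "'a \<Rightarrow> real^'k" and Sig :: "real^'k^'k"
  assumes z_measurable [measurable]: "z \<in> borel_measurable M"
    and indep_sources: "indep_vars (\<lambda>_. borel) (\<lambda>j \<omega>. z \<omega> $ j) UNIV"
    and gaussian_noise: "gaussian_vec M g Sig"
    and indep_noise: "indep_var borel z borel g"
begin

lemma source_measurable [measurable]: "(\<lambda>\<omega>. z \<omega> $ j) \<in> borel_measurable M"
  by (rule measurable_compose[OF z_measurable]) measurable

lemma inner_mixture:
  "v \<bullet> (B *v z \<omega> + g \<omega>) = (\<Sum>j\<in>UNIV. (column j B \<bullet> v) * z \<omega> $ j) + v \<bullet> g \<omega>"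
  by (simp add: inner_add_right inner_matrix_vector_columns)

lemma indep_scaled_sources: "indep_vars (\<lambda>_. borel) (\<lambda>j \<omega>. c j * z \<omega> $ j) UNIV"
  by (rule indep_vars_compose2[OF indep_sources]) measurable

lemma indep_mixed_sources_noise:
  "indep_var borel (\<lambda>\<omega>. \<Sum>j\<in>UNIV. c j * z \<omega> $ j) borel (\<lambda>\<omega>. v \<bullet> g \<omega>)"
  using indep_var_compose[OF indep_noise, of "\<lambda>y. \<Sum>j\<in>UNIV. c j * y $ j" borel "\<lambda>y. v \<bullet> y" borel]
  by (simp add: o_def)

lemma char_mixture:
  "(\<integral>\<omega>. iexp (v \<bullet> (B *v z \<omega> + g \<omega>)) \<partial>M)
    = (\<Prod>j\<in>UNIV. \<integral>\<omega>. iexp ((column j B \<bullet> v) * z \<omega> $ j) \<partial>M) * exp (- (v \<bullet> (Sig *v v)) / 2)"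
  unfolding inner_mixture integral_iexp_add_indep[OF indep_mixed_sources_noise]
    integral_iexp_sum_indep[OF indep_scaled_sources] gaussian_vec_char[OF gaussian_noise] ..

lemma mgf_mixture:
  assumes "integrable M (\<lambda>\<omega>. exp (v \<bullet> (B *v z \<omega> + g \<omega>)))"
  shows "integrable M (\<lambda>\<omega>. exp ((column j B \<bullet> v) * z \<omega> $ j))"
    and "(\<integral>\<omega>. exp (v \<bullet> (B *v z \<omega> + g \<omega>)) \<partial>M)
      = (\<Prod>j\<in>UNIV. \<integral>\<omega>. exp ((column j B \<bullet> v) * z \<omega> $ j) \<partial>M) * exp (v \<bullet> (Sig *v v) / 2)"
proof -
  note split = integral_exp_add_indep[OF indep_mixed_sources_noise[of "\<lambda>j. column j B \<bullet> v" v],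
      unfolded inner_mixture[symmetric], OF assms]
  show "integrable M (\<lambda>\<omega>. exp ((column j B \<bullet> v) * z \<omega> $ j))"
    by (rule integral_exp_sum_indep(1)[OF finite indep_scaled_sources split(1)]) simp
  show "(\<integral>\<omega>. exp (v \<bullet> (B *v z \<omega> + g \<omega>)) \<partial>M)
      = (\<Prod>j\<in>UNIV. \<integral>\<omega>. exp ((column j B \<bullet> v) * z \<omega> $ j) \<partial>M) * exp (v \<bullet> (Sig *v v) / 2)"
    unfolding inner_mixture split(3)[unfolded inner_mixture]
      integral_exp_sum_indep(2)[OF finite indep_scaled_sources split(1)] gaussian_vec_mgf(2)[OF gaussian_noise] ..
qed

lemma quadratic_form_mixture_cov:
  "v \<bullet> ((B ** diag_mat a ** transpose B + Sig) *v v)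
    = (\<Sum>j\<in>UNIV. a $ j * (column j B \<bullet> v)\<^sup>2) + v \<bullet> (Sig *v v)"
  by (simp only: matrix_vector_mult_add_rdistrib inner_add_right quadratic_form_congruence_diag_mat)

lemma cf_cgf_mixture:
  assumes "wd_cgf M (\<lambda>\<omega>. B *v z \<omega> + g \<omega>) v"
  shows "cf_cgf M (\<lambda>\<omega>. B *v z \<omega> + g \<omega>) (B ** diag_mat a ** transpose B + Sig) v
    = (\<Sum>j\<in>UNIV. ln (\<integral>\<omega>. exp ((column j B \<bullet> v) * z \<omega> $ j) \<partial>M) - a $ j / 2 * (column j B \<bullet> v)\<^sup>2)"
proof -
  note int = assms[unfolded wd_cgf_def]
  have pos: "(\<integral>\<omega>. exp ((column j B \<bullet> v) * z \<omega> $ j) \<partial>M) > 0" for j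
    by (rule integral_exp_pos[OF mgf_mixture(1)[OF int]])
  have "ln (\<integral>\<omega>. exp (v \<bullet> (B *v z \<omega> + g \<omega>)) \<partial>M)
      = (\<Sum>j\<in>UNIV. ln (\<integral>\<omega>. exp ((column j B \<bullet> v) * z \<omega> $ j) \<partial>M)) + v \<bullet> (Sig *v v) / 2"
    unfolding mgf_mixture(2)[OF int] using pos
    by (simp add: ln_mult prod_pos ln_prod less_imp_neq[symmetric])
  moreover have "(\<Sum>j\<in>UNIV. ln (\<integral>\<omega>. exp ((column j B \<bullet> v) * z \<omega> $ j) \<partial>M) - a $ j / 2 * (column j B \<bullet> v)\<^sup>2)
      = (\<Sum>j\<in>UNIV. ln (\<integral>\<omega>. exp ((column j B \<bullet> v) * z \<omega> $ j) \<partial>M))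
        - 1 / 2 * (\<Sum>j\<in>UNIV. a $ j * (column j B \<bullet> v)\<^sup>2)"
    by (simp add: sum_subtractf sum_distrib_left)
  ultimately show ?thesis
    unfolding cf_cgf_def quadratic_form_mixture_cov by (simp only: distrib_left)
qed

lemma has_real_derivative_source_mgf:
  assumes "open U" and wd: "\<And>v. v \<in> U \<Longrightarrow> wd_cgf M (\<lambda>\<omega>. B *v z \<omega> + g \<omega>) v"
    and "v \<in> U" "column j B \<noteq> 0"
  shows "((\<lambda>t. \<integral>\<omega>. exp (t * z \<omega> $ j) \<partial>M) has_real_derivative
      (\<integral>\<omega>. z \<omega> $ j * exp ((column j B \<bullet> v) * z \<omega> $ j) \<partial>M)) (at (column j B \<bullet> v))"
    and "((\<lambda>t. \<integral>\<omega>. z \<omega> $ j * exp (t * z \<omega> $ j) \<partial>M) has_real_derivative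
      (\<integral>\<omega>. (z \<omega> $ j)\<^sup>2 * exp ((column j B \<bullet> v) * z \<omega> $ j) \<partial>M)) (at (column j B \<bullet> v))"
proof -
  have "open ((\<lambda>v. column j B \<bullet> v) ` U)"
    using assms by (intro open_image_inner_left)
  moreover have "column j B \<bullet> v \<in> (\<lambda>v. column j B \<bullet> v) ` U"
    using assms by blast
  ultimately obtain e where "e > 0" and ball: "ball (column j B \<bullet> v) e \<subseteq> (\<lambda>v. column j B \<bullet> v) ` U"
    unfolding open_contains_ball by blast
  have "integrable M (\<lambda>\<omega>. exp (s * z \<omega> $ j))" if "s \<in> ball (column j B \<bullet> v) e" for s
  proof -
    from that ball obtain v' where "v' \<in> U" "s = column j B \<bullet> v'" by blast
    with mgf_mixture(1)[OF wd[unfolded wd_cgf_def]] show ?thesis by simp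
  qed
  note moment = has_real_derivative_exp_moment[OF source_measurable \<open>e > 0\<close> this]
  show "((\<lambda>t. \<integral>\<omega>. exp (t * z \<omega> $ j) \<partial>M) has_real_derivative
      (\<integral>\<omega>. z \<omega> $ j * exp ((column j B \<bullet> v) * z \<omega> $ j) \<partial>M)) (at (column j B \<bullet> v))"
    using moment[where n = 0] by simp
  show "((\<lambda>t. \<integral>\<omega>. z \<omega> $ j * exp (t * z \<omega> $ j) \<partial>M) has_real_derivative
      (\<integral>\<omega>. (z \<omega> $ j)\<^sup>2 * exp ((column j B \<bullet> v) * z \<omega> $ j) \<partial>M)) (at (column j B \<bullet> v))"
    using moment[where n = 1] by (simp add: power2_eq_square)
qed

lemma hessian_cgf_mixture:
  assumes hess: "hessian_at (wd_cgf M x) (cf_cgf M x (B ** diag_mat a ** transpose B + Sig)) u H"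
    and x_def: "x = (\<lambda>\<omega>. B *v z \<omega> + g \<omega>)"
  shows "\<exists>d. H = B ** diag_mat d ** transpose B"
proof -
  define W where "W = interior {v. wd_cgf M x v}"
  define K where "K j t = (\<integral>\<omega>. exp (t * z \<omega> $ j) \<partial>M)" for j t
  define K' where "K' j t = (\<integral>\<omega>. z \<omega> $ j * exp (t * z \<omega> $ j) \<partial>M)" for j t
  define K'' where "K'' j t = (\<integral>\<omega>. (z \<omega> $ j)\<^sup>2 * exp (t * z \<omega> $ j) \<partial>M)" for j t
  define G where "G j t = ln (K j t) - a $ j / 2 * t\<^sup>2" for j t
  define G' where "G' j t = K' j t / K j t - a $ j * t" for j t
  have wd: "wd_cgf M x v" if "v \<in> W" for v
    using that interior_subset unfolding W_def by blast
  have K_pos: "K j (column j B \<bullet> v) > 0" if "v \<in> W" for v j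
    using mgf_mixture(1)[OF wd[OF that, unfolded wd_cgf_def x_def]]
    unfolding K_def by (intro integral_exp_pos) simp
  have K': "(K j has_real_derivative K' j (column j B \<bullet> v)) (at (column j B \<bullet> v))"
    and K'': "(K' j has_real_derivative K'' j (column j B \<bullet> v)) (at (column j B \<bullet> v))"
    if "v \<in> W" "column j B \<noteq> 0" for v j
    using has_real_derivative_source_mgf[OF _ wd[unfolded x_def] that] unfolding W_def K_def K'_def K''_def
    by auto
  txt \<open>The \<open>j\<close>-th diagonal entry is the variance of \<open>z\<^sub>j\<close> under the exponentially tilted law,
    minus \<open>a $ j\<close>.\<close>
  have "H = B ** diag_mat (\<chi> j. let t = column j B \<bullet> u in
      (K'' j t * K j t - (K' j t)\<^sup>2) / (K j t)\<^sup>2 - a $ j) ** transpose B"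
  proof (rule hessian_at_separable[OF hess, folded W_def, where G = G and G' = G'])
    show "cf_cgf M x (B ** diag_mat a ** transpose B + Sig) v = (\<Sum>j\<in>UNIV. G j (column j B \<bullet> v))"
      if "v \<in> W" for v
      using cf_cgf_mixture[OF wd[OF that, unfolded x_def]] by (simp add: x_def G_def K_def)
    show "(G j has_real_derivative G' j (column j B \<bullet> v)) (at (column j B \<bullet> v))"
      if "v \<in> W" "column j B \<noteq> 0" for j v
      unfolding G_def G'_def using K_pos[OF that(1)] K'[OF that]
      by (auto intro!: derivative_eq_intros simp: field_simps)
    have "u \<in> W"
      unfolding W_def by (rule hessian_at_in_interior[OF hess])
    then show "(G' j has_real_derivative (let t = column j B \<bullet> u in
        (K'' j t * K j t - (K' j t)\<^sup>2) / (K j t)\<^sup>2 - a $ j)) (at (column j B \<bullet> u))"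
      if "column j B \<noteq> 0" for j
      unfolding G'_def Let_def using K_pos[OF \<open>u \<in> W\<close>, of j] K'[OF \<open>u \<in> W\<close> that] K''[OF \<open>u \<in> W\<close> that]
      by (auto intro!: derivative_eq_intros simp: field_simps power2_eq_square)
  qed
  then show ?thesis by blast
qed

lemma cf_char_mixture:
  assumes "wd_char M (\<lambda>\<omega>. B *v z \<omega> + g \<omega>) v"
  shows "(\<integral>\<omega>. iexp ((column j B \<bullet> v) * z \<omega> $ j) \<partial>M) \<noteq> 0"
    and "Re (cf_char M (\<lambda>\<omega>. B *v z \<omega> + g \<omega>) (B ** diag_mat a ** transpose B + Sig) v)
      = (\<Sum>j\<in>UNIV. ln ((cmod (\<integral>\<omega>. iexp ((column j B \<bullet> v) * z \<omega> $ j) \<partial>M))\<^sup>2) + a $ j * (column j B \<bullet> v)\<^sup>2)"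
    and "\<exists>n::int. Im (cf_char M (\<lambda>\<omega>. B *v z \<omega> + g \<omega>) (B ** diag_mat a ** transpose B + Sig) v) = 2 * pi * of_int n"
proof -
  define \<phi> where "\<phi> = (\<integral>\<omega>. iexp (v \<bullet> (B *v z \<omega> + g \<omega>)) \<partial>M)"
  define \<phi>s where "\<phi>s j = (\<integral>\<omega>. iexp ((column j B \<bullet> v) * z \<omega> $ j) \<partial>M)" for j
  define q where "q = v \<bullet> (Sig *v v)"
  have \<phi>_nz: "\<phi> \<noteq> 0"
    using assms unfolding wd_char_def \<phi>_def by simp
  have \<phi>_eq: "\<phi> = (\<Prod>j\<in>UNIV. \<phi>s j) * complex_of_real (exp (- q / 2))"
    unfolding \<phi>_def \<phi>s_def q_def by (rule char_mixture)
  then show \<phi>s_nz: "\<phi>s j \<noteq> 0" for j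
    using \<phi>_nz by auto
  have cf_eq: "cf_char M (\<lambda>\<omega>. B *v z \<omega> + g \<omega>) (B ** diag_mat a ** transpose B + Sig) v
      = Ln \<phi> + Ln (cnj \<phi>) + complex_of_real (v \<bullet> ((B ** diag_mat a ** transpose B + Sig) *v v))"
  proof -
    have "cnj \<phi> = (\<integral>\<omega>. cnj (iexp (v \<bullet> (B *v z \<omega> + g \<omega>))) \<partial>M)"
      unfolding \<phi>_def by simp
    also have "\<dots> = (\<integral>\<omega>. exp (- (\<i> * complex_of_real (v \<bullet> (B *v z \<omega> + g \<omega>)))) \<partial>M)"
      by (simp add: exp_cnj)
    finally have "(\<integral>\<omega>. exp (- (\<i> * complex_of_real (v \<bullet> (B *v z \<omega> + g \<omega>)))) \<partial>M) = cnj \<phi>" ..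
    then show ?thesis unfolding cf_char_def \<phi>_def by simp
  qed
  have "Re (cf_char M (\<lambda>\<omega>. B *v z \<omega> + g \<omega>) (B ** diag_mat a ** transpose B + Sig) v)
      = 2 * ln (cmod \<phi>) + (\<Sum>j\<in>UNIV. a $ j * (column j B \<bullet> v)\<^sup>2) + q"
    unfolding cf_eq quadratic_form_mixture_cov q_def using \<phi>_nz by simp
  also have "2 * ln (cmod \<phi>) = (\<Sum>j\<in>UNIV. ln ((cmod (\<phi>s j))\<^sup>2)) - q"
    unfolding \<phi>_eq using \<phi>s_nz
    by (simp add: norm_mult ln_mult prod_pos ln_prod ln_realpow sum_distrib_left flip: prod_norm)
  finally show "Re (cf_char M (\<lambda>\<omega>. B *v z \<omega> + g \<omega>) (B ** diag_mat a ** transpose B + Sig) v)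
      = (\<Sum>j\<in>UNIV. ln ((cmod (\<phi>s j))\<^sup>2) + a $ j * (column j B \<bullet> v)\<^sup>2)"
    by (simp add: sum.distrib)
  have "exp (cf_char M (\<lambda>\<omega>. B *v z \<omega> + g \<omega>) (B ** diag_mat a ** transpose B + Sig) v)
      = complex_of_real ((cmod \<phi>)\<^sup>2 * exp (v \<bullet> ((B ** diag_mat a ** transpose B + Sig) *v v)))"
    unfolding cf_eq of_real_mult complex_norm_square using \<phi>_nz by (simp add: exp_add exp_of_real)
  then show "\<exists>n::int. Im (cf_char M (\<lambda>\<omega>. B *v z \<omega> + g \<omega>) (B ** diag_mat a ** transpose B + Sig) v) = 2 * pi * of_int n"
    by (rule Im_in_2pi_Ints_if_exp_pos_real) (use \<phi>_nz in simp)
qed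

lemma hessian_char_mixture:
  assumes hess: "hessian_at (wd_char M x) (cf_char M x (B ** diag_mat a ** transpose B + Sig)) u H"
    and x_def: "x = (\<lambda>\<omega>. B *v z \<omega> + g \<omega>)"
    and second_moments: "\<And>j. integrable M (\<lambda>\<omega>. (z \<omega> $ j)\<^sup>2)"
  shows "\<exists>d. H = (\<chi> i l. complex_of_real ((B ** diag_mat d ** transpose B) $ i $ l))"
proof -
  define W where "W = interior {v. wd_char M x v}"
  have wd: "wd_char M (\<lambda>\<omega>. B *v z \<omega> + g \<omega>) v" if "v \<in> W" for v
    using that interior_subset unfolding W_def x_def by blast
  have "\<exists>n::int. Im (cf_char M x (B ** diag_mat a ** transpose B + Sig) v) = 2 * pi * of_int n"
    if "wd_char M x v" for v
    using cf_char_mixture(3) that unfolding x_def by blast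
  then have Re_hess: "hessian_at (wd_char M x) (\<lambda>v. Re (cf_char M x (B ** diag_mat a ** transpose B + Sig) v))
        u (\<chi> i l. Re (H $ i $ l))"
    and H_real: "H = (\<chi> i l. complex_of_real (Re (H $ i $ l)))"
    by (intro hessian_at_Re[OF hess]; blast)+
  define N where "N j t = (cmod (\<integral>\<omega>. iexp (t * z \<omega> $ j) \<partial>M))\<^sup>2" for j t
  have "\<forall>j. \<exists>N'. (\<forall>t. (N j has_real_derivative N' t) (at t)) \<and> (\<forall>t. \<exists>D. (N' has_real_derivative D) (at t))"
    unfolding N_def by (intro allI norm_char_square_twice_differentiable[OF source_measurable second_moments])
  from choice[OF this] obtain N' where
    "\<forall>j. (\<forall>t. (N j has_real_derivative N' j t) (at t)) \<and> (\<forall>t. \<exists>D. (N' j has_real_derivative D) (at t))"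
    by blast
  then have N': "\<And>j t. (N j has_real_derivative N' j t) (at t)"
    and N'': "\<And>j t. \<exists>D. (N' j has_real_derivative D) (at t)"
    by blast+
  have N_pos: "N j (column j B \<bullet> v) > 0" if "v \<in> W" for v j
    using cf_char_mixture(1)[OF wd[OF that]] unfolding N_def by simp
  define G where "G j t = ln (N j t) + a $ j * t\<^sup>2" for j t
  define G' where "G' j t = N' j t / N j t + 2 * a $ j * t" for j t
  have "u \<in> W"
    unfolding W_def by (rule hessian_at_in_interior[OF hess])
  have "\<exists>D. (G' j has_real_derivative D) (at (column j B \<bullet> u))" for j
  proof -
    obtain D where "(N' j has_real_derivative D) (at (column j B \<bullet> u))"
      using N'' by blast
    with N' N_pos[OF \<open>u \<in> W\<close>, of j] show ?thesis
      unfolding G'_def by (intro exI) (rule derivative_eq_intros refl | assumption | simp)+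
  qed
  then obtain G'' where G'': "\<And>j. (G' j has_real_derivative G'' j) (at (column j B \<bullet> u))"
    by metis
  have Re_H_eq: "(\<chi> i l. Re (H $ i $ l)) = B ** diag_mat (\<chi> j. G'' j) ** transpose B"
  proof (rule hessian_at_separable[OF Re_hess, folded W_def, where G = G and G' = G'])
    show "Re (cf_char M x (B ** diag_mat a ** transpose B + Sig) v) = (\<Sum>j\<in>UNIV. G j (column j B \<bullet> v))"
      if "v \<in> W" for v
      using cf_char_mixture(2)[OF wd[OF that]] unfolding x_def G_def N_def .
    show "(G j has_real_derivative G' j (column j B \<bullet> v)) (at (column j B \<bullet> v))" if "v \<in> W" for j v
      using N' N_pos[OF that(1), of j] unfolding G_def G'_def
      by (auto intro!: derivative_eq_intros simp: field_simps)
  qed (rule G'')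
  have Re_H: "Re (H $ i $ l) = (B ** diag_mat (\<chi> j. G'' j) ** transpose B) $ i $ l" for i l
    using arg_cong[OF Re_H_eq, of "\<lambda>A. A $ i $ l"] by simp
  have "H = (\<chi> i l. complex_of_real ((B ** diag_mat (\<chi> j. G'' j) ** transpose B) $ i $ l))"
    by (subst H_real) (simp only: Re_H)
  then show ?thesis ..
qed

end

theorem theoremA1:
  fixes M :: "'a measure" and B Sig S :: "real^'k^'k" and z g x :: "'a \<Rightarrow> real^'k"
    and a :: "real^'k"
  assumes "prob_space M"
    and "z \<in> borel_measurable M"
    and "prob_space.indep_vars M (\<lambda>_. borel) (\<lambda>j \<omega>. z \<omega> $ j) UNIV"
    and "\<forall>j. integrable M (\<lambda>\<omega>. (z \<omega> $ j)^2)"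
    and "\<forall>j. (\<integral>\<omega>. z \<omega> $ j \<partial>M) = 0"
    and "\<forall>j. (\<integral>\<omega>. (z \<omega> $ j)^2 \<partial>M) = a $ j"
    and "gaussian_vec M g Sig"
    and "prob_space.indep_var M borel z borel g"
    and x_def: "x = (\<lambda>\<omega>. B *v z \<omega> + g \<omega>)"
    and S_def: "S = B ** diag_mat a ** transpose B + Sig"
  shows "(\<forall>u H. hessian_at (wd_char M x) (cf_char M x S) u H \<longrightarrow>
            (\<exists>d. H = (\<chi> i j. complex_of_real ((B ** diag_mat d ** transpose B) $ i $ j))))
       \<and> (\<forall>u H. hessian_at (wd_cgf M x) (cf_cgf M x S) u H \<longrightarrow>
            (\<exists>d. H = B ** diag_mat d ** transpose B))"
proof -
  interpret noisy_ica M z g Sig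
    using assms(1-3,7,8) by (intro noisy_ica.intro noisy_ica_axioms.intro)
  show ?thesis
    using hessian_char_mixture[OF _ x_def] hessian_cgf_mixture[OF _ x_def] assms(4)
    unfolding S_def by blast
qed

end
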